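(* Let $f$, $u_0$, $L_f$, $V$, $\pi$, $L_v$, $L_\pi$ be as follows: $f:\mathcal{X}\times\mathcal{U}\to\mathcal{X}$ is Lipschitz with constant $L_f$ (i.e. $\|f(x,u)-f(x',u')\|_\infty\le L_f\|(x-x',u-u')\|_\infty$), $f(0,u_0)=0$, and $V:\mathcal{X}\to\mathbb{R}$, $\pi:\mathcal{X}\to\mathcal{U}$ are Lipschitz (w.r.t. $\|\cdot\|_\infty$) with constants $L_v,L_\pi$. Let $\mathcal{R}\subseteq\mathcal{X}$ be compact, $c_1\ge0$, and $c_2=\max\{L_v,1\}L_f\max\{1,L_\pi+c_1\}$. Let $\eta>0$ with $\mathcal{B}(0,\eta)\subset\mathcal{R}$, and assume $V(x)>0$ for all $x\in\mathcal{R}$ with $\|x\|_\infty\ge\eta$. Then there exists $\bar\epsilon>0$ such that for every $\epsilon\in(0,\bar\epsilon]$ the following holds: if $(V,\pi)$ is $\epsilon$-stable within $\mathcal{R}$, $\mathcal{D}(\mathcal{R},\rho)$ is an $\mathcal{R}$-invariant sublevel set with $\mathcal{B}(0,\epsilon)\subset\mathcal{D}(\mathcal{R},\rho)$, $\|\pi(0)-u_0\|_\infty\le c_1\epsilon$, $c_2\epsilon<\rho$ and $\mathcal{B}(0,c_2\epsilon)\subset\mathcal{R}$, then for every $x_0\in\mathcal{D}(\mathcal{R},\rho)\setminus\mathcal{B}(0,\epsilon)$ the sequence $x_{k+1}=f(x_k,\pi(x_k))$ satisfies $\|x_k\|_\infty\le\eta$ for all $k\ge K$, for some finite $K$.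
   Context: All norms are $\|\cdot\|_\infty$. $\mathcal{B}(0,\epsilon)=\{x:\|x\|_\infty<\epsilon\}$. The pair $(V,\pi)$ is called $\epsilon$-stable within a region $\mathcal{R}$ if: (a) $V(0)=0$; (b) there exists $\zeta>0$ such that $V(f(x,\pi(x)))-V(x)<-\zeta$ for all $x\in\mathcal{R}\setminus\mathcal{B}(0,\epsilon)$; (c) $V(x)>0$ for all $x\in\mathcal{R}\setminus\mathcal{B}(0,\epsilon)$. For $\rho\in\mathbb{R}$, $\mathcal{D}(\mathcal{R},\rho)=\{x\in\mathcal{R}: V(x)\le\rho\}$; it is called an $\mathcal{R}$-invariant sublevel set if $x\in\mathcal{D}(\mathcal{R},\rho)$ implies $f(x,\pi(x))\in\mathcal{R}$. *)

theory Defs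
  imports "HOL-Analysis.Analysis"
begin

definition linf :: "real ^ 'n \<Rightarrow> real" where
  "linf x = Max (range (\<lambda>i. \<bar>x $ i\<bar>))"

definition ball_inf :: "real \<Rightarrow> (real ^ 'n) set" where
  "ball_inf e = {x. linf x < e}"

definition eps_stable ::
  "(real ^ 'n \<Rightarrow> real ^ 'm \<Rightarrow> real ^ 'n) \<Rightarrow> (real ^ 'n \<Rightarrow> real) \<Rightarrow>
   (real ^ 'n \<Rightarrow> real ^ 'm) \<Rightarrow> (real ^ 'n) set \<Rightarrow> real \<Rightarrow> bool" where
  "eps_stable f V \<pi> R e \<longleftrightarrow>
     V 0 = 0 \<and>
     (\<exists>\<zeta>>0. \<forall>x\<in>R - ball_inf e. V (f x (\<pi> x)) - V x < - \<zeta>) \<and>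
     (\<forall>x\<in>R - ball_inf e. V x > 0)"

definition sublevel :: "(real ^ 'n \<Rightarrow> real) \<Rightarrow> (real ^ 'n) set \<Rightarrow> real \<Rightarrow> (real ^ 'n) set" where
  "sublevel V R \<rho> = {x\<in>R. V x \<le> \<rho>}"

definition R_invariant ::
  "(real ^ 'n \<Rightarrow> real ^ 'm \<Rightarrow> real ^ 'n) \<Rightarrow> (real ^ 'n \<Rightarrow> real) \<Rightarrow>
   (real ^ 'n \<Rightarrow> real ^ 'm) \<Rightarrow> (real ^ 'n) set \<Rightarrow> real \<Rightarrow> bool" where
  "R_invariant f V \<pi> R \<rho> \<longleftrightarrow> (\<forall>x\<in>sublevel V R \<rho>. f x (\<pi> x) \<in> R)"

end

theory Submission
  imports Defs
begin

text \<open>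
  Continuity of \<open>V\<close> and compactness of \<open>R\<close> give a level \<open>m > 0\<close> such that every point of
  \<open>R\<close> with \<open>V x < m\<close> lies in \<open>\<B>(0,\<eta>)\<close>; the threshold for \<open>\<epsilon>\<close> is chosen so that \<open>c\<^sub>2 \<epsilon> < m\<close>.
  Outside \<open>\<B>(0,\<epsilon>)\<close> the value of \<open>V\<close> drops by at least \<open>\<zeta>\<close> per step, and \<open>V\<close> is bounded
  below on \<open>R\<close>, so every trajectory enters \<open>\<B>(0,\<epsilon>)\<close>. A point of \<open>\<B>(0,\<epsilon>)\<close> is mapped into
  \<open>{V \<le> c\<^sub>2 \<epsilon>}\<close> by the Lipschitz bounds, and \<open>V\<close> does not increase outside \<open>\<B>(0,\<epsilon>)\<close>, so
  from then on the trajectory stays in \<open>\<B>(0,\<epsilon>) \<union> {V \<le> c\<^sub>2 \<epsilon>} \<subseteq> \<B>(0,\<eta>)\<close>.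
\<close>

lemma component_le_linf: "\<bar>x $ i\<bar> \<le> linf x"
  unfolding linf_def by (rule Max_ge) auto

lemma linf_le: "(\<And>i. \<bar>x $ i\<bar> \<le> c) \<Longrightarrow> linf x \<le> c"
  unfolding linf_def by (subst Max_le_iff) auto

lemma linf_nonneg: "0 \<le> linf x"
  using component_le_linf[of x undefined] by linarith

lemma linf_zero [simp]: "linf 0 = 0"
  using linf_le[of 0 0] linf_nonneg[of 0] by (auto intro: antisym)

lemma linf_vec [simp]: "linf (vec c) = \<bar>c\<bar>"
  using linf_le[of "vec c" "\<bar>c\<bar>"] component_le_linf[of "vec c" undefined] by (auto intro: antisym)

lemma linf_minus_commute: "linf (x - y) = linf (y - x)"
  unfolding linf_def by (simp add: abs_minus_commute)

lemma linf_triangle: "linf (x + y) \<le> linf x + linf y"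
proof (rule linf_le)
  fix i
  show "\<bar>(x + y) $ i\<bar> \<le> linf x + linf y"
    using component_le_linf[of x i] component_le_linf[of y i] abs_triangle_ineq[of "x $ i" "y $ i"]
    by simp
qed

lemma linf_diff_triangle: "linf (x - z) \<le> linf (x - y) + linf (y - z)"
  using linf_triangle[of "x - y" "y - z"] by simp

lemma linf_reverse_triangle: "\<bar>linf x - linf y\<bar> \<le> linf (x - y)"
  using linf_diff_triangle[of x 0 y] linf_diff_triangle[of y 0 x] linf_minus_commute[of x y]
  by simp

lemma linf_le_norm: "linf x \<le> norm x"
  by (rule linf_le) (rule component_le_norm_cart)

lemma linf_bound_coefficient_nonneg:
  fixes L :: real
  assumes "\<And>x y :: real ^ 'n. 0 \<le> L * linf (x - y)"
  shows "0 \<le> L"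
  using assms[of "vec 1" 0] unfolding diff_zero linf_vec by simp

lemma continuous_on_linf_lipschitz:
  fixes g :: "real ^ 'n \<Rightarrow> real"
  assumes g_lip: "\<And>x y. \<bar>g x - g y\<bar> \<le> L * linf (x - y)"
  shows "continuous_on S g"
proof (rule lipschitz_on_continuous_on)
  have "0 \<le> L"
    by (rule linf_bound_coefficient_nonneg) (use g_lip abs_ge_zero order_trans in blast)
  moreover have "\<bar>g x - g y\<bar> \<le> L * norm (x - y)" for x y
    using g_lip[of x y] mult_left_mono[OF linf_le_norm[of "x - y"] \<open>0 \<le> L\<close>] by linarith
  ultimately show "L-lipschitz_on S g"
    unfolding lipschitz_on_def dist_real_def dist_norm by blast
qed

lemma continuous_on_linf: "continuous_on S linf"
  by (rule continuous_on_linf_lipschitz[where L = 1]) (simp add: linf_reverse_triangle)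

lemma compact_sublevel_inside_level:
  fixes V g :: "'a::topological_space \<Rightarrow> real"
  assumes "compact R" "continuous_on R V" "continuous_on UNIV g"
    and pos: "\<And>x. x \<in> R \<Longrightarrow> \<eta> \<le> g x \<Longrightarrow> 0 < V x"
  shows "\<exists>m>0. \<forall>x\<in>R. V x < m \<longrightarrow> g x < \<eta>"
proof (cases "R \<inter> {x. \<eta> \<le> g x} = {}")
  case True
  then show ?thesis by (intro exI[of _ 1]) auto
next
  case False
  have "closed {x. \<eta> \<le> g x}"
    using closed_Collect_le[of "\<lambda>_. \<eta>" g] assms(3) by simp
  then have "compact (R \<inter> {x. \<eta> \<le> g x})"
    using \<open>compact R\<close> by blast
  then obtain xmin where xmin: "xmin \<in> R" "\<eta> \<le> g xmin"
    and least: "\<And>y. y \<in> R \<Longrightarrow> \<eta> \<le> g y \<Longrightarrow> V xmin \<le> V y"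
    using continuous_attains_inf[OF _ False continuous_on_subset[OF assms(2)]] by blast
  show ?thesis
    using pos[OF xmin] least by (intro exI[of _ "V xmin"]) force
qed

lemma funpow_in_invariant_set:
  assumes "\<And>x. x \<in> D \<Longrightarrow> T x \<in> D" "x0 \<in> D"
  shows "(T ^^ k) x0 \<in> D"
  by (induction k) (use assms in auto)

lemma orbit_enters_set:
  fixes V :: "'a \<Rightarrow> real"
  assumes invariant: "\<And>x. x \<in> D \<Longrightarrow> T x \<in> D" and "x0 \<in> D"
    and decrease: "\<And>x. x \<in> D \<Longrightarrow> x \<notin> B \<Longrightarrow> V (T x) < V x - \<zeta>"
    and "0 < \<zeta>" and lower: "\<And>x. x \<in> D \<Longrightarrow> b \<le> V x"
  shows "\<exists>k. (T ^^ k) x0 \<in> B"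
proof (rule ccontr)
  assume "\<not> ?thesis"
  then have outside: "(T ^^ k) x0 \<notin> B" for k by blast
  have orbit_in_D: "(T ^^ k) x0 \<in> D" for k
    using funpow_in_invariant_set[OF invariant \<open>x0 \<in> D\<close>] .
  have descent: "V ((T ^^ k) x0) \<le> V x0 - real k * \<zeta>" for k
  proof (induction k)
    case (Suc k)
    then show ?case
      using decrease[OF orbit_in_D outside, of k] by (simp add: algebra_simps)
  qed simp
  obtain k where "V x0 - b < real k * \<zeta>"
    using ex_less_of_nat_mult[OF \<open>0 < \<zeta>\<close>] by blast
  then show False
    using descent[of k] lower[OF orbit_in_D[of k]] by linarith
qed

lemma orbit_stays_in_set_or_sublevel:
  fixes V :: "'a \<Rightarrow> real"
  assumes invariant: "\<And>x. x \<in> D \<Longrightarrow> T x \<in> D" and "x0 \<in> D"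
    and nonincrease: "\<And>x. x \<in> D \<Longrightarrow> x \<notin> B \<Longrightarrow> V (T x) \<le> V x"
    and step_from_B: "\<And>x. x \<in> D \<Longrightarrow> x \<in> B \<Longrightarrow> V (T x) \<le> c"
    and entered: "(T ^^ k0) x0 \<in> B" and "k0 \<le> k"
  shows "(T ^^ k) x0 \<in> B \<or> V ((T ^^ k) x0) \<le> c"
  using \<open>k0 \<le> k\<close>
proof (induction k rule: dec_induct)
  case (step n)
  have "(T ^^ n) x0 \<in> D"
    using funpow_in_invariant_set[OF invariant \<open>x0 \<in> D\<close>] .
  then show ?case
    using step.IH nonincrease step_from_B by force
qed (use entered in simp)

lemma closed_loop_value_le_near_origin:
  fixes f :: "real ^ 'n \<Rightarrow> real ^ 'm \<Rightarrow> real ^ 'n"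
    and V :: "real ^ 'n \<Rightarrow> real"
    and \<pi> :: "real ^ 'n \<Rightarrow> real ^ 'm"
  assumes f_lip: "\<And>x x' u u'. linf (f x u - f x' u') \<le> L_f * max (linf (x - x')) (linf (u - u'))"
    and f0: "f 0 u0 = 0"
    and V_lip: "\<And>x x'. \<bar>V x - V x'\<bar> \<le> L_v * linf (x - x')"
    and \<pi>_lip: "\<And>x x'. linf (\<pi> x - \<pi> x') \<le> L_\<pi> * linf (x - x')"
    and V0: "V 0 = 0"
    and \<pi>0: "linf (\<pi> 0 - u0) \<le> c1 * \<epsilon>"
    and x: "linf x \<le> \<epsilon>"
  shows "V (f x (\<pi> x)) \<le> max L_v 1 * L_f * max 1 (L_\<pi> + c1) * \<epsilon>"
proof -
  define M where "M = max 1 (L_\<pi> + c1)"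
  have "0 \<le> \<epsilon>"
    using x linf_nonneg order_trans by blast
  have "0 \<le> L_\<pi>"
    by (rule linf_bound_coefficient_nonneg) (use \<pi>_lip linf_nonneg order_trans in blast)
  have "0 \<le> L_f"
  proof (rule linf_bound_coefficient_nonneg)
    fix y z :: "real ^ 'n"
    show "0 \<le> L_f * linf (y - z)"
      using f_lip[of y u0 z u0] linf_nonneg[of "f y u0 - f z u0"] linf_nonneg[of "y - z"] by simp
  qed
  have "linf (\<pi> x - u0) \<le> linf (\<pi> x - \<pi> 0) + linf (\<pi> 0 - u0)"
    by (rule linf_diff_triangle)
  also have "\<dots> \<le> L_\<pi> * \<epsilon> + c1 * \<epsilon>"
    using \<pi>_lip[of x 0] \<pi>0 mult_left_mono[OF x \<open>0 \<le> L_\<pi>\<close>] by simp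
  also have "\<dots> \<le> M * \<epsilon>"
    unfolding M_def distrib_right[symmetric] using \<open>0 \<le> \<epsilon>\<close> by (intro mult_right_mono) auto
  finally have control: "linf (\<pi> x - u0) \<le> M * \<epsilon>" .
  have state: "linf x \<le> M * \<epsilon>"
    using x mult_right_mono[of 1 M \<epsilon>] \<open>0 \<le> \<epsilon>\<close> unfolding M_def by simp
  have "linf (f x (\<pi> x)) \<le> L_f * max (linf x) (linf (\<pi> x - u0))"
    using f_lip[of x "\<pi> x" 0 u0] f0 by simp
  also have "\<dots> \<le> L_f * (M * \<epsilon>)"
    using control state \<open>0 \<le> L_f\<close> by (intro mult_left_mono) auto
  finally have next_state: "linf (f x (\<pi> x)) \<le> L_f * (M * \<epsilon>)" .
  have "V (f x (\<pi> x)) \<le> L_v * linf (f x (\<pi> x))"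
    using V_lip[of "f x (\<pi> x)" 0] V0 by simp
  also have "\<dots> \<le> max L_v 1 * linf (f x (\<pi> x))"
    using linf_nonneg by (intro mult_right_mono) auto
  also have "\<dots> \<le> max L_v 1 * (L_f * (M * \<epsilon>))"
    using next_state by (intro mult_left_mono) auto
  finally show ?thesis
    unfolding M_def by (simp add: mult.assoc)
qed

lemma eps_stable_orbit_eventually_in_ball_or_sublevel:
  assumes stable: "eps_stable f V \<pi> R \<epsilon>" and invariant: "R_invariant f V \<pi> R \<rho>"
    and step_from_ball: "\<And>x. x \<in> ball_inf \<epsilon> \<Longrightarrow> V (f x (\<pi> x)) \<le> c" and "c < \<rho>"
    and lower: "\<And>x. x \<in> R \<Longrightarrow> b \<le> V x"
    and x0: "x0 \<in> sublevel V R \<rho>"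
  shows "\<exists>K. \<forall>k\<ge>K. ((\<lambda>x. f x (\<pi> x)) ^^ k) x0 \<in> ball_inf \<epsilon> \<union> sublevel V R c"
proof -
  define T where "T = (\<lambda>x. f x (\<pi> x))"
  obtain \<zeta> where "0 < \<zeta>" and decrease: "\<And>x. x \<in> R - ball_inf \<epsilon> \<Longrightarrow> V (T x) - V x < - \<zeta>"
    using stable unfolding eps_stable_def T_def by blast
  have into_R: "T x \<in> R" if "x \<in> sublevel V R \<rho>" for x
    using invariant that unfolding R_invariant_def T_def by blast
  have decrease_in_D: "V (T x) < V x - \<zeta>" if "x \<in> sublevel V R \<rho>" "x \<notin> ball_inf \<epsilon>" for x
    using decrease[of x] that by (simp add: sublevel_def)
  have step_from_ball_T: "V (T x) \<le> c" if "x \<in> ball_inf \<epsilon>" for x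
    using step_from_ball[OF that] by (simp add: T_def)
  have sublevel_invariant: "T x \<in> sublevel V R \<rho>" if "x \<in> sublevel V R \<rho>" for x
  proof (cases "x \<in> ball_inf \<epsilon>")
    case True
    then show ?thesis
      using into_R[OF that] step_from_ball_T[OF True] \<open>c < \<rho>\<close> by (simp add: sublevel_def)
  next
    case False
    then show ?thesis
      using into_R[OF that] decrease_in_D[OF that False] that \<open>0 < \<zeta>\<close> by (simp add: sublevel_def)
  qed
  obtain k0 where entered: "(T ^^ k0) x0 \<in> ball_inf \<epsilon>"
    using orbit_enters_set[where T = T and V = V and B = "ball_inf \<epsilon>" and b = b,
        OF sublevel_invariant x0 decrease_in_D \<open>0 < \<zeta>\<close>] lower
    by (auto simp: sublevel_def)
  have "(T ^^ k) x0 \<in> ball_inf \<epsilon> \<union> sublevel V R c" if "k0 \<le> k" for k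
  proof -
    have "(T ^^ k) x0 \<in> ball_inf \<epsilon> \<or> V ((T ^^ k) x0) \<le> c"
      using orbit_stays_in_set_or_sublevel[where T = T and V = V and B = "ball_inf \<epsilon>" and c = c,
          OF sublevel_invariant x0 _ step_from_ball_T entered that]
        decrease_in_D \<open>0 < \<zeta>\<close> by force
    moreover have "(T ^^ k) x0 \<in> R"
      using funpow_in_invariant_set[OF sublevel_invariant x0] by (simp add: sublevel_def)
    ultimately show ?thesis
      by (auto simp: sublevel_def)
  qed
  then show ?thesis
    unfolding T_def by blast
qed

theorem theorem1:
  fixes f :: "real ^ 'n \<Rightarrow> real ^ 'm \<Rightarrow> real ^ 'n"
    and V :: "real ^ 'n \<Rightarrow> real"
    and \<pi> :: "real ^ 'n \<Rightarrow> real ^ 'm"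
    and u0 :: "real ^ 'm"
    and R :: "(real ^ 'n) set"
    and L_f L_v L_\<pi> c1 c2 \<eta> :: real
  assumes f_lip: "\<And>x x' u u'. linf (f x u - f x' u') \<le> L_f * max (linf (x - x')) (linf (u - u'))"
    and f0: "f 0 u0 = 0"
    and V_lip: "\<And>x x'. \<bar>V x - V x'\<bar> \<le> L_v * linf (x - x')"
    and \<pi>_lip: "\<And>x x'. linf (\<pi> x - \<pi> x') \<le> L_\<pi> * linf (x - x')"
    and R_compact: "compact R"
    and c1: "c1 \<ge> 0"
    and c2: "c2 = max L_v 1 * L_f * max 1 (L_\<pi> + c1)"
    and \<eta>: "\<eta> > 0" "ball_inf \<eta> \<subseteq> R"
    and Vpos: "\<forall>x\<in>R. linf x \<ge> \<eta> \<longrightarrow> V x > 0"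
  shows "\<exists>\<epsilon>bar>0. \<forall>\<epsilon>. 0 < \<epsilon> \<and> \<epsilon> \<le> \<epsilon>bar \<longrightarrow> (\<forall>\<rho>.
           eps_stable f V \<pi> R \<epsilon> \<and> R_invariant f V \<pi> R \<rho> \<and>
           ball_inf \<epsilon> \<subseteq> sublevel V R \<rho> \<and>
           linf (\<pi> 0 - u0) \<le> c1 * \<epsilon> \<and> c2 * \<epsilon> < \<rho> \<and> ball_inf (c2 * \<epsilon>) \<subseteq> R \<longrightarrow>
           (\<forall>x0 \<in> sublevel V R \<rho> - ball_inf \<epsilon>.
              \<exists>K. \<forall>k\<ge>K. linf (((\<lambda>x. f x (\<pi> x)) ^^ k) x0) \<le> \<eta>))"
proof -
  have V_cont: "continuous_on R V"
    by (rule continuous_on_linf_lipschitz[OF V_lip])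
  obtain m where "0 < m" and level: "\<forall>x\<in>R. V x < m \<longrightarrow> linf x < \<eta>"
    using compact_sublevel_inside_level[OF R_compact V_cont continuous_on_linf] Vpos by force
  obtain b where lower: "\<And>x. x \<in> R \<Longrightarrow> b \<le> V x"
    using bounded_imp_bdd_below[OF compact_imp_bounded[OF compact_continuous_image[OF V_cont R_compact]]]
    by (auto simp: bdd_below_def)
  show ?thesis
  proof (intro exI[of _ "min \<eta> (m / (\<bar>c2\<bar> + 1))"] conjI allI impI ballI)
    show "0 < min \<eta> (m / (\<bar>c2\<bar> + 1))"
      using \<eta> \<open>0 < m\<close> by simp
    fix \<epsilon> \<rho> x0
    assume \<epsilon>: "0 < \<epsilon> \<and> \<epsilon> \<le> min \<eta> (m / (\<bar>c2\<bar> + 1))"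
      and H: "eps_stable f V \<pi> R \<epsilon> \<and> R_invariant f V \<pi> R \<rho> \<and> ball_inf \<epsilon> \<subseteq> sublevel V R \<rho> \<and>
        linf (\<pi> 0 - u0) \<le> c1 * \<epsilon> \<and> c2 * \<epsilon> < \<rho> \<and> ball_inf (c2 * \<epsilon>) \<subseteq> R"
      and x0: "x0 \<in> sublevel V R \<rho> - ball_inf \<epsilon>"
    have "c2 * \<epsilon> \<le> \<bar>c2\<bar> * \<epsilon>"
      using \<epsilon> by (intro mult_right_mono) auto
    also have "\<dots> \<le> \<bar>c2\<bar> * (m / (\<bar>c2\<bar> + 1))"
      using \<epsilon> by (intro mult_left_mono) auto
    also have "\<dots> < m"
      using \<open>0 < m\<close> by (simp add: field_simps)
    finally have "c2 * \<epsilon> < m" .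
    moreover have "V (f x (\<pi> x)) \<le> c2 * \<epsilon>" if "x \<in> ball_inf \<epsilon>" for x
      using closed_loop_value_le_near_origin[OF f_lip f0 V_lip \<pi>_lip] H that
      unfolding c2 eps_stable_def ball_inf_def by (simp add: less_imp_le)
    then obtain K where "\<forall>k\<ge>K. ((\<lambda>x. f x (\<pi> x)) ^^ k) x0 \<in> ball_inf \<epsilon> \<union> sublevel V R (c2 * \<epsilon>)"
      using eps_stable_orbit_eventually_in_ball_or_sublevel[of f V \<pi> R \<epsilon> \<rho>] H lower x0 by blast
    ultimately show "\<exists>K. \<forall>k\<ge>K. linf (((\<lambda>x. f x (\<pi> x)) ^^ k) x0) \<le> \<eta>"
      using \<epsilon> level by (force simp: ball_inf_def sublevel_def)
  qed
qed

end
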